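(* Let $p\ge 1$, let $n_1,\dots,n_p\ge1$ and $k_s\in[n_s]$ for each $s$. Suppose there is a maximum-size non-trivially intersecting family $\mathcal{F}\subseteq \prod_{s}\binom{[n_s]}{k_s}$ which is $Q$-shifted for some $Q\subsetneq [p]$ such that $k_t=1$ for every $t\notin Q$. Then there is a maximum-size non-trivially intersecting family $\mathcal{F}'\subseteq \prod_{s}\binom{[n_s]}{k_s}$ which is shifted.
   Context: Multi-part setting: the ground set is the disjoint union $\bigsqcup_{s=1}^p [n_s]$ of $p$ parts, $[n]=\{1,\dots,n\}$. For $F_s\subseteq[n_s]$, $\bigsqcup_s F_s$ denotes the subset having $F_s$ in part $s$; $\prod_{s}\binom{[n_s]}{k_s}$ is the collection of all $\bigsqcup_s F_s$ with $|F_s|=k_s$ for all $s$. A family is intersecting if any two of its sets intersect (in some part); trivially intersecting if some element (in some part) lies in all its sets; non-trivially intersecting if intersecting but not trivially intersecting. "Maximum-size" means of maximum size among all non-trivially intersecting subfamilies of $\prod_{s}\binom{[n_s]}{k_s}$. Shifting: for $t\in[p]$, $1\le i<j\le n_t$ and $F=\bigsqcup_s F_s$, $S_t^{i,j}(F)=F$ if $i\in F_t$ or $j\notin F_t$, and otherwise $S_t^{i,j}(F)$ replaces $F_t$ by $(F_t\setminus\{j\})\cup\{i\}$. For a family, $S_t^{i,j}(\mathcal F)=\{S_t^{i,j}(F):F\in\mathcal F\}\cup\{F: F\in\mathcal F,\ S_t^{i,j}(F)\in\mathcal F\}$. $\mathcal F$ is $t$-shifted if $S_t^{i,j}(\mathcal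 F)=\mathcal F$ for all $1\le i<j\le n_t$, and shifted if $t$-shifted for all $t\in[p]$. A non-trivially intersecting family $\mathcal F$ is $Q$-shifted (for $Q\subseteq[p]$) if it is $s$-shifted for each $s\in Q$, and for each $s\notin Q$ there are $1\le i_s<j_s\le n_s$ such that $S_s^{i_s,j_s}(\mathcal F)$ is trivially intersecting. *)

theory Defs
  imports Main
begin

(* A subset of the disjoint union of [n_1],...,[n_p] is a set of pairs (s,x),
   meaning element x of part s. *)

definition ground :: "nat \<Rightarrow> (nat \<Rightarrow> nat) \<Rightarrow> (nat \<times> nat) set" where
  "ground p n = {(s,x). s \<in> {1..p} \<and> x \<in> {1..n s}}"

definition part :: "(nat \<times> nat) set \<Rightarrow> nat \<Rightarrow> nat set" where
  "part F s = {x. (s,x) \<in> F}"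

definition prodfam :: "nat \<Rightarrow> (nat \<Rightarrow> nat) \<Rightarrow> (nat \<Rightarrow> nat) \<Rightarrow> (nat \<times> nat) set set" where
  "prodfam p n k = {F. F \<subseteq> ground p n \<and> (\<forall>s\<in>{1..p}. card (part F s) = k s)}"

definition intersecting :: "(nat \<times> nat) set set \<Rightarrow> bool" where
  "intersecting \<F> \<longleftrightarrow> (\<forall>A\<in>\<F>. \<forall>B\<in>\<F>. A \<inter> B \<noteq> {})"

definition triv_intersecting :: "(nat \<times> nat) set set \<Rightarrow> bool" where
  "triv_intersecting \<F> \<longleftrightarrow> (\<exists>e. \<forall>A\<in>\<F>. e \<in> A)"

definition nontriv_intersecting :: "(nat \<times> nat) set set \<Rightarrow> bool" where
  "nontriv_intersecting \<F> \<longleftrightarrow> intersecting \<F> \<and> \<not> triv_intersecting \<F>"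

definition max_nontriv :: "nat \<Rightarrow> (nat \<Rightarrow> nat) \<Rightarrow> (nat \<Rightarrow> nat) \<Rightarrow> (nat \<times> nat) set set \<Rightarrow> bool" where
  "max_nontriv p n k \<F> \<longleftrightarrow> \<F> \<subseteq> prodfam p n k \<and> nontriv_intersecting \<F> \<and>
     (\<forall>\<G>. \<G> \<subseteq> prodfam p n k \<and> nontriv_intersecting \<G> \<longrightarrow> card \<G> \<le> card \<F>)"

definition shift :: "nat \<Rightarrow> nat \<Rightarrow> nat \<Rightarrow> (nat \<times> nat) set \<Rightarrow> (nat \<times> nat) set" where
  "shift t i j F = (if i \<in> part F t \<or> j \<notin> part F t then F
                   else (F - {(t,j)}) \<union> {(t,i)})"

definition shift_fam :: "nat \<Rightarrow> nat \<Rightarrow> nat \<Rightarrow> (nat \<times> nat) set set \<Rightarrow> (nat \<times> nat) set set" where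
  "shift_fam t i j \<F> = shift t i j ` \<F> \<union> {F \<in> \<F>. shift t i j F \<in> \<F>}"

definition t_shifted :: "(nat \<Rightarrow> nat) \<Rightarrow> nat \<Rightarrow> (nat \<times> nat) set set \<Rightarrow> bool" where
  "t_shifted n t \<F> \<longleftrightarrow> (\<forall>i j. 1 \<le> i \<and> i < j \<and> j \<le> n t \<longrightarrow> shift_fam t i j \<F> = \<F>)"

definition shifted :: "nat \<Rightarrow> (nat \<Rightarrow> nat) \<Rightarrow> (nat \<times> nat) set set \<Rightarrow> bool" where
  "shifted p n \<F> \<longleftrightarrow> (\<forall>t\<in>{1..p}. t_shifted n t \<F>)"

definition Q_shifted :: "nat \<Rightarrow> (nat \<Rightarrow> nat) \<Rightarrow> nat set \<Rightarrow> (nat \<times> nat) set set \<Rightarrow> bool" where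
  "Q_shifted p n Q \<F> \<longleftrightarrow> nontriv_intersecting \<F> \<and>
     (\<forall>s\<in>Q. t_shifted n s \<F>) \<and>
     (\<forall>s\<in>{1..p} - Q. \<exists>i j. 1 \<le> i \<and> i < j \<and> j \<le> n s \<and>
          triv_intersecting (shift_fam s i j \<F>))"

end

theory Submission
  imports Defs
begin

(*
  Let R be the set of parts outside Q; there k_t = 1. Since shifting F in part t \<in> R makes it
  trivially intersecting, the new common element is (t, i_t), so every member of F uses exactly
  i_t or j_t in part t. Hence F is assembled from fibres F_T (T \<subseteq> R the parts using j_t), each
  a family on the parts in Q closed under all shifts there; a nonempty such family contains
  the set that is {1..k_s} in every part s \<in> Q. Maximality of F makes F_T and F_{R-T}
  cross-intersecting and forces one of them to be nonempty, and the shift back in part t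
  shows that F_T and F_{T \<union> {t}} are never both nonempty; together these give |R| \<ge> 3.
  Now fix u \<subseteq> R maximising |F_u| + |F_{R-u}| and distinct a, b, c \<in> R. Exactly one of T and
  R - T contains at most one of a, b, c, so putting the fibre F_u \<union> F_{R-u} over such T and
  F_u \<inter> F_{R-u} over the others, now on the points 1 and 2 of the parts in R, gives a family
  that is shifted, non-trivially intersecting and at least as large as F.
*)

section \<open>Layers and shift-closed families\<close>

lemma mem_part [simp]: "x \<in> part X s \<longleftrightarrow> (s, x) \<in> X"
  by (simp add: part_def)

lemma part_Un [simp]: "part (X \<union> Y) s = part X s \<union> part Y s"
  by (auto simp: part_def)

definition ground_on :: "nat set \<Rightarrow> (nat \<Rightarrow> nat) \<Rightarrow> (nat \<times> nat) set" where
  "ground_on S n = {(s, x). s \<in> S \<and> x \<in> {1..n s}}"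

definition layer :: "nat set \<Rightarrow> (nat \<Rightarrow> nat) \<Rightarrow> (nat \<Rightarrow> nat) \<Rightarrow> (nat \<times> nat) set set" where
  "layer S n k = {X. X \<subseteq> ground_on S n \<and> (\<forall>s\<in>S. card (part X s) = k s)}"

lemma prodfam_eq_layer: "prodfam p n k = layer {1..p} n k"
  by (simp add: prodfam_def layer_def ground_def ground_on_def)

lemma ground_on_eq_Sigma: "ground_on S n = Sigma S (\<lambda>s. {1..n s})"
  by (auto simp: ground_on_def)

lemma finite_ground_on: "finite S \<Longrightarrow> finite (ground_on S n)"
  by (simp add: ground_on_eq_Sigma)

lemma finite_layer: "finite S \<Longrightarrow> finite (layer S n k)"
  by (rule finite_subset[of _ "Pow (ground_on S n)"]) (auto simp: layer_def finite_ground_on)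

lemma part_eq_empty_if_notin: "X \<subseteq> ground_on S n \<Longrightarrow> s \<notin> S \<Longrightarrow> part X s = {}"
  by (auto simp: ground_on_def)

lemma ground_on_mem_layer:
  assumes "\<forall>s\<in>S. k s \<le> n s"
  shows "ground_on S k \<in> layer S n k"
proof -
  have "part (ground_on S k) s = {1..k s}" if "s \<in> S" for s
    using that by (auto simp: ground_on_def)
  with assms show ?thesis
    by (force simp: layer_def ground_on_def)
qed

lemma mem_shift_other_part: "s \<noteq> t \<Longrightarrow> (s, x) \<in> shift t i j G \<longleftrightarrow> (s, x) \<in> G"
  by (auto simp: shift_def)

lemma part_shift: "part (shift t i j G) t =
    (if i \<in> part G t \<or> j \<notin> part G t then part G t else part G t - {j} \<union> {i})"
  by (auto simp: shift_def part_def)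

lemma shift_Un_disjoint: "part Y t = {} \<Longrightarrow> shift t i j (X \<union> Y) = shift t i j X \<union> Y"
  by (auto simp: shift_def part_def)

lemma shift_mem_layer:
  assumes X: "X \<in> layer S n k" and t: "t \<in> S" and ij: "1 \<le> i" "i < j" "j \<le> n t"
  shows "shift t i j X \<in> layer S n k"
proof -
  have X_ground: "X \<subseteq> ground_on S n" and card_X: "\<forall>s\<in>S. card (part X s) = k s"
    using X by (auto simp: layer_def)
  have "shift t i j X \<subseteq> X \<union> {(t, i)}"
    by (auto simp: shift_def)
  with X_ground t ij have "shift t i j X \<subseteq> ground_on S n"
    by (auto simp: ground_on_def)
  moreover have "card (part (shift t i j X) t) = card (part X t)"
  proof (cases "i \<in> part X t \<or> j \<notin> part X t")
    case False
    have "finite (part X t)"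
      by (rule finite_subset[of _ "{1..n t}"]) (use X_ground in \<open>auto simp: ground_on_def\<close>)
    moreover have "card (part X t) > 0"
      using False calculation card_gt_0_iff by blast
    ultimately show ?thesis
      using False by (simp add: part_shift card_insert_if)
  qed (simp add: part_shift)
  moreover have "part (shift t i j X) s = part X s" if "s \<noteq> t" for s
    using that by (auto simp: mem_shift_other_part)
  ultimately show ?thesis
    using card_X by (simp add: layer_def) (metis)
qed

lemma shift_fam_eq_iff: "shift_fam t i j \<F> = \<F> \<longleftrightarrow> shift t i j ` \<F> \<subseteq> \<F>"
  unfolding shift_fam_def by blast

definition shift_closed :: "nat set \<Rightarrow> (nat \<Rightarrow> nat) \<Rightarrow> (nat \<times> nat) set set \<Rightarrow> bool" where
  "shift_closed S n \<F> \<longleftrightarrow>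
     (\<forall>t\<in>S. \<forall>i j. 1 \<le> i \<and> i < j \<and> j \<le> n t \<longrightarrow> shift t i j ` \<F> \<subseteq> \<F>)"

lemma shift_closed_iff_t_shifted: "shift_closed S n \<F> \<longleftrightarrow> (\<forall>t\<in>S. t_shifted n t \<F>)"
  by (simp add: shift_closed_def t_shifted_def shift_fam_eq_iff)

lemma shifted_iff_shift_closed: "shifted p n \<F> \<longleftrightarrow> shift_closed {1..p} n \<F>"
  by (simp add: shifted_def shift_closed_iff_t_shifted)

lemma shift_closedD:
  "shift_closed S n \<F> \<Longrightarrow> t \<in> S \<Longrightarrow> 1 \<le> i \<Longrightarrow> i < j \<Longrightarrow> j \<le> n t \<Longrightarrow> X \<in> \<F> \<Longrightarrow>
    shift t i j X \<in> \<F>"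
  unfolding shift_closed_def by blast

lemma shift_closed_Un: "shift_closed S n \<A> \<Longrightarrow> shift_closed S n \<B> \<Longrightarrow> shift_closed S n (\<A> \<union> \<B>)"
  unfolding shift_closed_def image_Un by (meson Un_mono)

lemma shift_closed_Int: "shift_closed S n \<A> \<Longrightarrow> shift_closed S n \<B> \<Longrightarrow> shift_closed S n (\<A> \<inter> \<B>)"
  unfolding shift_closed_def by (meson image_Int_subset inf_mono order_trans)

text \<open>A member of least total weight admits no weight-decreasing shift, so in every part it
  consists of the smallest elements.\<close>

lemma ground_on_mem_shift_closed:
  assumes S: "finite S" and \<A>: "\<A> \<subseteq> layer S n k" "\<A> \<noteq> {}" "shift_closed S n \<A>"
  shows "ground_on S k \<in> \<A>"
proof -
  define w where "w X = (\<Sum>e\<in>X. snd e)" for X :: "(nat \<times> nat) set"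
  obtain X where X: "X \<in> \<A>" and X_least: "\<And>Y. Y \<in> \<A> \<Longrightarrow> w X \<le> w Y"
    using ex_has_least_nat[of "\<lambda>X. X \<in> \<A>" _ w] \<A>(2) by blast
  have X_ground: "X \<subseteq> ground_on S n" and card_X: "\<And>s. s \<in> S \<Longrightarrow> card (part X s) = k s"
    using X \<A>(1) by (auto simp: layer_def)
  have finite_X: "finite X"
    using X_ground finite_ground_on[OF S] finite_subset by blast
  have finite_part: "finite (part X s)" for s
    by (rule finite_subset[of _ "snd ` X"]) (use finite_X in force)+
  have part_X: "part X q = {1..k q}" if q: "q \<in> S" for q
  proof (rule ccontr)
    assume ne: "part X q \<noteq> {1..k q}"
    have card_eq: "card (part X q) = card {1..k q}"
      using card_X q by simp
    obtain a where a: "a \<in> {1..k q}" "a \<notin> part X q"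
      using card_subset_eq[OF finite_part _ card_eq[symmetric]] ne by blast
    obtain b where b: "b \<in> part X q" "b \<notin> {1..k q}"
      using card_subset_eq[OF finite_atLeastAtMost _ card_eq] ne by blast
    have b_le: "b \<le> n q"
      using b(1) X_ground by (auto simp: ground_on_def)
    have "a < b"
      using a b X_ground by (auto simp: ground_on_def)
    then have "shift q a b X \<in> \<A>"
      using shift_closedD[OF \<A>(3) q _ _ b_le X] a by auto
    moreover have "shift q a b X = insert (q, a) (X - {(q, b)})"
      using a b by (auto simp: shift_def)
    then have "w (shift q a b X) + b = w X + a"
      using a b finite_X by (simp add: w_def sum.remove)
    ultimately show False
      using X_least \<open>a < b\<close> by fastforce
  qed
  have "X = ground_on S k"
  proof (rule set_eqI)
    fix e :: "nat \<times> nat"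
    obtain s x where e: "e = (s, x)" by force
    show "e \<in> X \<longleftrightarrow> e \<in> ground_on S k"
    proof (cases "s \<in> S")
      case True
      then show ?thesis
        using part_X[OF True] by (auto simp: e ground_on_def simp flip: mem_part)
    next
      case False
      then show ?thesis
        using X_ground by (auto simp: e ground_on_def)
    qed
  qed
  with X show ?thesis by simp
qed

section \<open>Families assembled from fibres\<close>

definition selection ::
    "nat set \<Rightarrow> (nat \<Rightarrow> nat) \<Rightarrow> (nat \<Rightarrow> nat) \<Rightarrow> nat set \<Rightarrow> (nat \<times> nat) set" where
  "selection R lo hi T = (\<lambda>s. (s, if s \<in> T then hi s else lo s)) ` R"

lemma mem_selection:
  "(s, x) \<in> selection R lo hi T \<longleftrightarrow> s \<in> R \<and> x = (if s \<in> T then hi s else lo s)"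
  by (auto simp: selection_def)

lemma part_selection:
  "part (selection R lo hi T) s = (if s \<in> R then {if s \<in> T then hi s else lo s} else {})"
  by (auto simp: mem_selection)

lemma selection_disjoint_iff:
  assumes "\<forall>s\<in>R. lo s \<noteq> hi s" "T \<subseteq> R" "T' \<subseteq> R"
  shows "selection R lo hi T \<inter> selection R lo hi T' = {} \<longleftrightarrow> T' = R - T"
proof
  assume disj: "selection R lo hi T \<inter> selection R lo hi T' = {}"
  have "(s \<in> T) \<noteq> (s \<in> T')" if "s \<in> R" for s
  proof
    assume "(s \<in> T) = (s \<in> T')"
    with that have "(s, if s \<in> T then hi s else lo s) \<in> selection R lo hi T \<inter> selection R lo hi T'"
      by (simp add: mem_selection)
    with disj show False by simp
  qed
  with assms(3) show "T' = R - T" by blast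
next
  assume "T' = R - T"
  with assms(1) show "selection R lo hi T \<inter> selection R lo hi T' = {}"
    by (force simp: selection_def split: if_splits)
qed

lemma Un_selection_inj:
  assumes "X \<subseteq> ground_on Q n" "X' \<subseteq> ground_on Q n" "Q \<inter> R = {}" "\<forall>s\<in>R. lo s \<noteq> hi s"
    and "T \<subseteq> R" "T' \<subseteq> R" and eq: "X \<union> selection R lo hi T = X' \<union> selection R lo hi T'"
  shows "X = X' \<and> T = T'"
proof
  have X_eq: "Y = {e \<in> Y \<union> selection R lo hi U. fst e \<in> Q}" if "Y \<subseteq> ground_on Q n" for Y U
    using that assms(3) by (auto simp: ground_on_def selection_def)
  have "X = {e \<in> X \<union> selection R lo hi T. fst e \<in> Q}"
    by (rule X_eq[OF assms(1)])
  also have "\<dots> = {e \<in> X' \<union> selection R lo hi T'. fst e \<in> Q}"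
    by (simp only: eq)
  also have "\<dots> = X'"
    by (rule X_eq[OF assms(2), symmetric])
  finally show "X = X'" .
  have T_eq: "U = {s \<in> R. (s, hi s) \<in> Y \<union> selection R lo hi U}"
    if "Y \<subseteq> ground_on Q n" "U \<subseteq> R" for Y U
    using that assms(3,4) by (force simp: ground_on_def selection_def)
  have "T = {s \<in> R. (s, hi s) \<in> X \<union> selection R lo hi T}"
    by (rule T_eq[OF assms(1,5)])
  also have "\<dots> = {s \<in> R. (s, hi s) \<in> X' \<union> selection R lo hi T'}"
    by (simp only: eq)
  also have "\<dots> = T'"
    by (rule T_eq[OF assms(2,6), symmetric])
  finally show "T = T'" .
qed

lemma layer_decompose:
  assumes G: "G \<in> layer (Q \<union> R) n k" and QR: "Q \<inter> R = {}"
    and parts: "\<forall>s\<in>R. part G s = {lo s} \<or> part G s = {hi s}"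
  obtains X T where "X \<in> layer Q n k" "T \<subseteq> R" "G = X \<union> selection R lo hi T"
proof
  define X where "X = {e \<in> G. fst e \<in> Q}"
  define T where "T = {s \<in> R. (s, hi s) \<in> G}"
  have G_ground: "G \<subseteq> ground_on (Q \<union> R) n" and card_G: "\<forall>s\<in>Q. card (part G s) = k s"
    using G by (auto simp: layer_def)
  moreover have "part X s = part G s" if "s \<in> Q" for s
    using that by (auto simp: X_def)
  ultimately show "X \<in> layer Q n k"
    by (auto simp: layer_def X_def ground_on_def)
  show "T \<subseteq> R" by (auto simp: T_def)
  have "(s, x) \<in> G \<longleftrightarrow> x = (if s \<in> T then hi s else lo s)" if s: "s \<in> R" for s x
    using parts s by (auto simp: T_def simp flip: mem_part)
  then show "G = X \<union> selection R lo hi T"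
    using G_ground QR by (auto simp: X_def mem_selection ground_on_def)
qed

lemma Un_selection_mem_layer:
  assumes X: "X \<in> layer Q n k" and QR: "Q \<inter> R = {}" and T: "T \<subseteq> R"
    and R: "\<forall>s\<in>R. k s = 1 \<and> lo s \<in> {1..n s} \<and> hi s \<in> {1..n s}"
  shows "X \<union> selection R lo hi T \<in> layer (Q \<union> R) n k"
proof -
  have X_ground: "X \<subseteq> ground_on Q n" and card_X: "\<forall>s\<in>Q. card (part X s) = k s"
    using X by (auto simp: layer_def)
  have "selection R lo hi T \<subseteq> ground_on R n"
    using R by (auto simp: selection_def ground_on_def)
  with X_ground have "X \<union> selection R lo hi T \<subseteq> ground_on (Q \<union> R) n"
    by (auto simp: ground_on_def)
  moreover have "part X s = {}" if "s \<in> R" for s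
    using that QR part_eq_empty_if_notin[OF X_ground] by blast
  then have "card (part (X \<union> selection R lo hi T) s) = k s" if "s \<in> Q \<union> R" for s
    using that card_X R QR by (auto simp: part_selection)
  ultimately show ?thesis
    by (simp add: layer_def)
qed

lemma shift_Un_selection_insert:
  assumes "s \<in> R" "s \<notin> T" "lo s \<noteq> hi s" "part X s = {}"
  shows "shift s (lo s) (hi s) (X \<union> selection R lo hi (insert s T)) = X \<union> selection R lo hi T"
proof -
  have "part (X \<union> selection R lo hi (insert s T)) s = {hi s}"
    using assms by (simp add: part_selection)
  then have "shift s (lo s) (hi s) (X \<union> selection R lo hi (insert s T)) =
      X \<union> selection R lo hi (insert s T) - {(s, hi s)} \<union> {(s, lo s)}"
    using assms(3) by (simp add: shift_def)
  also have "\<dots> = X \<union> selection R lo hi T"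
  proof -
    have "(s, x) \<notin> X" for x
      using assms(4) by (metis empty_iff mem_part)
    show ?thesis
    proof (rule set_eqI)
      fix e :: "nat \<times> nat"
      obtain t x where e: "e = (t, x)" by force
      show "e \<in> X \<union> selection R lo hi (insert s T) - {(s, hi s)} \<union> {(s, lo s)} \<longleftrightarrow>
          e \<in> X \<union> selection R lo hi T"
        using assms(1-3) \<open>\<And>x. (s, x) \<notin> X\<close> by (cases "t = s") (auto simp: e mem_selection)
    qed
  qed
  finally show ?thesis .
qed

definition assemble :: "nat set \<Rightarrow> (nat \<Rightarrow> nat) \<Rightarrow> (nat \<Rightarrow> nat) \<Rightarrow>
    (nat set \<Rightarrow> (nat \<times> nat) set set) \<Rightarrow> (nat \<times> nat) set set" where
  "assemble R lo hi C = (\<Union>T\<in>Pow R. (\<lambda>X. X \<union> selection R lo hi T) ` C T)"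

lemma mem_assemble:
  "G \<in> assemble R lo hi C \<longleftrightarrow> (\<exists>T X. T \<subseteq> R \<and> X \<in> C T \<and> G = X \<union> selection R lo hi T)"
  by (auto simp: assemble_def)

lemma card_assemble:
  assumes "finite R" "Q \<inter> R = {}" "\<forall>s\<in>R. lo s \<noteq> hi s"
    and C: "\<And>T. T \<subseteq> R \<Longrightarrow> finite (C T) \<and> C T \<subseteq> Pow (ground_on Q n)"
  shows "card (assemble R lo hi C) = (\<Sum>T\<in>Pow R. card (C T))"
proof -
  have inj: "X = X' \<and> T = T'"
    if "T \<subseteq> R" "T' \<subseteq> R" "X \<in> C T" "X' \<in> C T'"
      "X \<union> selection R lo hi T = X' \<union> selection R lo hi T'" for X X' T T'
    using Un_selection_inj[of X Q n X' R lo hi T T'] that assms(2,3) C by blast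
  have "\<forall>T\<in>Pow R. \<forall>T'\<in>Pow R. T \<noteq> T' \<longrightarrow>
      (\<lambda>X. X \<union> selection R lo hi T) ` C T \<inter> (\<lambda>X. X \<union> selection R lo hi T') ` C T' = {}"
    using inj by blast
  then have "card (assemble R lo hi C) =
      (\<Sum>T\<in>Pow R. card ((\<lambda>X. X \<union> selection R lo hi T) ` C T))"
    unfolding assemble_def using assms(1) C by (intro card_UN_disjoint) auto
  also have "\<dots> = (\<Sum>T\<in>Pow R. card (C T))"
    by (intro sum.cong refl card_image inj_onI) (use inj in auto)
  finally show ?thesis .
qed

lemma Un_selection_Int_nonempty_iff:
  assumes "Q \<inter> R = {}" "\<forall>s\<in>R. lo s \<noteq> hi s" "T \<subseteq> R" "T' \<subseteq> R"
    and X: "X \<subseteq> ground_on Q n" and Y: "Y \<subseteq> ground_on Q n"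
  shows "(X \<union> selection R lo hi T) \<inter> (Y \<union> selection R lo hi T') \<noteq> {} \<longleftrightarrow>
    T' \<noteq> R - T \<or> X \<inter> Y \<noteq> {}"
proof -
  have "(s, x) \<notin> X" "(s, x) \<notin> Y" if "s \<in> R" for s x
    using that X Y assms(1) by (auto simp: ground_on_def)
  then have "X \<inter> selection R lo hi T' = {}" "selection R lo hi T \<inter> Y = {}"
    by (auto simp: selection_def)
  then have eq: "(X \<union> selection R lo hi T) \<inter> (Y \<union> selection R lo hi T') =
      X \<inter> Y \<union> selection R lo hi T \<inter> selection R lo hi T'"
    by blast
  show ?thesis
    unfolding eq Un_empty using selection_disjoint_iff[OF assms(2-4)] by argo
qed

lemma intersecting_assemble_iff:
  assumes QR: "Q \<inter> R = {}" and lo_hi: "\<forall>s\<in>R. lo s \<noteq> hi s"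
    and C: "\<And>T. T \<subseteq> R \<Longrightarrow> C T \<subseteq> Pow (ground_on Q n)"
  shows "intersecting (assemble R lo hi C) \<longleftrightarrow>
    (\<forall>T\<subseteq>R. \<forall>X\<in>C T. \<forall>Y\<in>C (R - T). X \<inter> Y \<noteq> {})"
proof -
  have meet: "(X \<union> selection R lo hi T) \<inter> (Y \<union> selection R lo hi T') \<noteq> {} \<longleftrightarrow>
      T' \<noteq> R - T \<or> X \<inter> Y \<noteq> {}"
    if "T \<subseteq> R" "T' \<subseteq> R" "X \<in> C T" "Y \<in> C T'" for T T' X Y
  proof (rule Un_selection_Int_nonempty_iff[OF QR lo_hi that(1,2)])
    show "X \<subseteq> ground_on Q n" "Y \<subseteq> ground_on Q n"
      using that(3,4) C[OF that(1)] C[OF that(2)] by auto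
  qed
  show ?thesis
  proof
    assume int: "intersecting (assemble R lo hi C)"
    show "\<forall>T\<subseteq>R. \<forall>X\<in>C T. \<forall>Y\<in>C (R - T). X \<inter> Y \<noteq> {}"
    proof (intro allI impI ballI)
      fix T X Y assume T: "T \<subseteq> R" and X: "X \<in> C T" and Y: "Y \<in> C (R - T)"
      have "X \<union> selection R lo hi T \<in> assemble R lo hi C"
        "Y \<union> selection R lo hi (R - T) \<in> assemble R lo hi C"
        using T X Y unfolding mem_assemble by (metis Diff_subset)+
      with int have "(X \<union> selection R lo hi T) \<inter> (Y \<union> selection R lo hi (R - T)) \<noteq> {}"
        unfolding intersecting_def by blast
      then show "X \<inter> Y \<noteq> {}"
        using meet[OF T _ X Y] by simp
    qed
  next
    assume cross: "\<forall>T\<subseteq>R. \<forall>X\<in>C T. \<forall>Y\<in>C (R - T). X \<inter> Y \<noteq> {}"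
    show "intersecting (assemble R lo hi C)"
      unfolding intersecting_def
    proof (intro ballI)
      fix G G' assume "G \<in> assemble R lo hi C" "G' \<in> assemble R lo hi C"
      then obtain T X T' Y where "T \<subseteq> R" "X \<in> C T" "G = X \<union> selection R lo hi T"
        and "T' \<subseteq> R" "Y \<in> C T'" "G' = Y \<union> selection R lo hi T'"
        unfolding mem_assemble by blast
      with cross meet[of T T' X Y] show "G \<inter> G' \<noteq> {}"
        by (cases "T' = R - T") simp_all
    qed
  qed
qed

lemma sum_Pow_split:
  assumes "finite R" and L: "\<And>T. T \<subseteq> R \<Longrightarrow> R - T \<in> L \<longleftrightarrow> T \<notin> L"
  shows "(\<Sum>T\<in>Pow R. f T) = (\<Sum>T\<in>Pow R \<inter> L. f T + f (R - T))"
proof -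
  have "bij_betw (\<lambda>T. R - T) (Pow R \<inter> L) (Pow R - L)"
    by (rule bij_betw_byWitness[where f' = "\<lambda>T. R - T"]) (use L in \<open>auto simp: double_diff\<close>)
  then have "(\<Sum>T\<in>Pow R - L. f T) = (\<Sum>T\<in>Pow R \<inter> L. f (R - T))"
    by (rule sum.reindex_bij_betw[symmetric])
  moreover have "(\<Sum>T\<in>Pow R. f T) = (\<Sum>T\<in>Pow R \<inter> L. f T) + (\<Sum>T\<in>Pow R - L. f T)"
    using assms(1) sum.Int_Diff[of "Pow R" f L] by simp
  ultimately show ?thesis
    by (simp add: sum.distrib)
qed

definition at_most_one_of :: "'a \<Rightarrow> 'a \<Rightarrow> 'a \<Rightarrow> 'a set set" where
  "at_most_one_of a b c = {T. \<not> (a \<in> T \<and> b \<in> T) \<and> \<not> (a \<in> T \<and> c \<in> T) \<and> \<not> (b \<in> T \<and> c \<in> T)}"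

lemma Diff_mem_at_most_one_of_iff:
  "a \<in> R \<Longrightarrow> b \<in> R \<Longrightarrow> c \<in> R \<Longrightarrow> a \<noteq> b \<Longrightarrow> a \<noteq> c \<Longrightarrow> b \<noteq> c \<Longrightarrow>
    R - T \<in> at_most_one_of a b c \<longleftrightarrow> T \<notin> at_most_one_of a b c"
  by (auto simp: at_most_one_of_def)

definition toggle :: "'a set \<Rightarrow> 'a \<Rightarrow> 'a set" where
  "toggle T s = (if s \<in> T then T - {s} else insert s T)"

lemma toggle_subset: "T \<subseteq> R \<Longrightarrow> s \<in> R \<Longrightarrow> toggle T s \<subseteq> R"
  by (auto simp: toggle_def)

lemma Diff_toggle: "T \<subseteq> R \<Longrightarrow> s \<in> R \<Longrightarrow> R - toggle T s = toggle (R - T) s"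
  by (auto simp: toggle_def)

section \<open>Structure of a maximum partly shifted family\<close>

locale Q_shifted_extremal =
  fixes p :: nat and n k :: "nat \<Rightarrow> nat" and Q :: "nat set"
    and F :: "(nat \<times> nat) set set" and i j :: "nat \<Rightarrow> nat"
  assumes k_le_n: "\<forall>s\<in>Q. k s \<le> n s"
    and max_F: "max_nontriv p n k F"
    and Q_psubset: "Q \<subset> {1..p}"
    and shift_closed_F: "shift_closed Q n F"
    and k_R: "\<forall>s\<in>{1..p} - Q. k s = 1"
    and shift_R: "\<forall>s\<in>{1..p} - Q. 1 \<le> i s \<and> i s < j s \<and> j s \<le> n s \<and>
      triv_intersecting (shift_fam s (i s) (j s) F)"
begin

definition R :: "nat set" where
  "R = {1..p} - Q"

lemma R_nonempty: "R \<noteq> {}"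
  using Q_psubset by (auto simp: R_def)

lemma finite_R: "finite R"
  by (simp add: R_def)

lemma finite_Q: "finite Q"
  using Q_psubset finite_subset by auto

lemma Q_R_disjoint: "Q \<inter> R = {}"
  by (auto simp: R_def)

lemma Q_Un_R: "Q \<union> R = {1..p}"
  using Q_psubset by (auto simp: R_def)

lemma R_bounds: "s \<in> R \<Longrightarrow> k s = 1 \<and> 1 \<le> i s \<and> i s < j s \<and> j s \<le> n s"
  using k_R shift_R by (simp add: R_def)

lemma i_neq_j: "\<forall>s\<in>R. i s \<noteq> j s"
  using R_bounds by fastforce

lemma F_subset_layer: "F \<subseteq> layer (Q \<union> R) n k"
  using max_F by (simp add: max_nontriv_def prodfam_eq_layer Q_Un_R)

lemma F_intersecting: "intersecting F"
  using max_F by (simp add: max_nontriv_def nontriv_intersecting_def)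

lemma F_not_triv: "\<not> triv_intersecting F"
  using max_F by (simp add: max_nontriv_def nontriv_intersecting_def)

lemma card_le_card_F:
  "\<G> \<subseteq> layer (Q \<union> R) n k \<Longrightarrow> nontriv_intersecting \<G> \<Longrightarrow> card \<G> \<le> card F"
  using max_F by (simp add: max_nontriv_def prodfam_eq_layer Q_Un_R)

lemma finite_F: "finite F"
  using F_subset_layer finite_layer[of "Q \<union> R" n k] finite_Q finite_R finite_subset by blast

text \<open>A common element of the shifted family outside part \<open>s\<close>, or other than \<open>i s\<close> in part
  \<open>s\<close>, would already be common to \<open>F\<close>.\<close>

lemma shift_fam_R_common:
  assumes s: "s \<in> R" and A: "A \<in> shift_fam s (i s) (j s) F"
  shows "(s, i s) \<in> A"
proof -
  have "triv_intersecting (shift_fam s (i s) (j s) F)"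
    using shift_R s by (simp add: R_def)
  then obtain e where e: "\<And>A. A \<in> shift_fam s (i s) (j s) F \<Longrightarrow> e \<in> A"
    unfolding triv_intersecting_def by blast
  have e_shift: "e \<in> shift s (i s) (j s) G" if "G \<in> F" for G
    using e that by (auto simp: shift_fam_def)
  obtain t x where tx: "e = (t, x)" by force
  have no_common: False if "\<And>G. G \<in> F \<Longrightarrow> e \<in> G"
    using F_not_triv that unfolding triv_intersecting_def by blast
  have t: "t = s"
  proof (rule ccontr)
    assume "t \<noteq> s"
    with e_shift tx show False
      by (intro no_common) (simp add: mem_shift_other_part)
  qed
  have "x = i s"
  proof (rule ccontr)
    assume x: "x \<noteq> i s"
    have "e \<in> G" if "G \<in> F" for G
    proof -
      have "x \<in> part (shift s (i s) (j s) G) s"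
        using e_shift[OF that] tx t by simp
      with x have "x \<in> part G s"
        by (auto simp: part_shift split: if_splits)
      with tx t show ?thesis by simp
    qed
    then show False by (rule no_common)
  qed
  with e[OF A] tx t show ?thesis by simp
qed

lemma part_R_cases:
  assumes G: "G \<in> F" and s: "s \<in> R"
  shows "part G s = {i s} \<or> part G s = {j s}"
proof -
  have "card (part G s) = 1"
    using F_subset_layer G s R_bounds[OF s] by (auto simp: layer_def)
  then obtain c where c: "part G s = {c}"
    by (auto simp: card_Suc_eq)
  have "(s, i s) \<in> shift s (i s) (j s) G"
    using shift_fam_R_common[OF s] G by (auto simp: shift_fam_def)
  then have "i s \<in> part (shift s (i s) (j s) G) s"
    by simp
  with c show ?thesis
    by (auto simp: part_shift split: if_splits)
qed

lemma shift_R_notin: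
  assumes G: "G \<in> F" and s: "s \<in> R" and part_G: "part G s = {j s}"
  shows "shift s (i s) (j s) G \<notin> F"
proof
  assume "shift s (i s) (j s) G \<in> F"
  with G have "G \<in> shift_fam s (i s) (j s) F"
    by (simp add: shift_fam_def)
  then have "i s \<in> part G s"
    using shift_fam_R_common[OF s] by simp
  with part_G R_bounds[OF s] show False
    by simp
qed

definition fibre :: "nat set \<Rightarrow> (nat \<times> nat) set set" where
  "fibre T = {X \<in> layer Q n k. X \<union> selection R i j T \<in> F}"

lemma fibre_subset_layer: "fibre T \<subseteq> layer Q n k"
  by (auto simp: fibre_def)

lemma fibre_subset_Pow_ground_on: "fibre T \<subseteq> Pow (ground_on Q n)"
  by (auto simp: fibre_def layer_def)

lemma finite_fibre: "finite (fibre T)"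
  using fibre_subset_layer finite_layer[OF finite_Q] finite_subset by blast

lemma F_eq_assemble: "F = assemble R i j fibre"
proof
  show "F \<subseteq> assemble R i j fibre"
  proof
    fix G assume G: "G \<in> F"
    have "G \<in> layer (Q \<union> R) n k"
      using F_subset_layer G by blast
    then obtain X T where "X \<in> layer Q n k" "T \<subseteq> R" "G = X \<union> selection R i j T"
      using layer_decompose[OF _ Q_R_disjoint] part_R_cases[OF G] by metis
    with G show "G \<in> assemble R i j fibre"
      unfolding mem_assemble fibre_def by blast
  qed
  show "assemble R i j fibre \<subseteq> F"
    by (auto simp: mem_assemble fibre_def)
qed

lemma fibres_cross_intersecting:
  assumes "T \<subseteq> R" "X \<in> fibre T" "Y \<in> fibre (R - T)"
  shows "X \<inter> Y \<noteq> {}"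
proof -
  have "intersecting (assemble R i j fibre)"
    using F_intersecting by (simp add: F_eq_assemble[symmetric])
  then have "\<forall>T\<subseteq>R. \<forall>X\<in>fibre T. \<forall>Y\<in>fibre (R - T). X \<inter> Y \<noteq> {}"
    using intersecting_assemble_iff[of Q R i j fibre n] Q_R_disjoint i_neq_j
      fibre_subset_Pow_ground_on
    by simp
  with assms show ?thesis
    by blast
qed

lemma fibre_shift_closed: "shift_closed Q n (fibre T)"
  unfolding shift_closed_def
proof (intro ballI allI impI subsetI)
  fix q a b X'
  assume q: "q \<in> Q" and ab: "1 \<le> a \<and> a < b \<and> b \<le> n q" and "X' \<in> shift q a b ` fibre T"
  then obtain X where X: "X \<in> fibre T" and X': "X' = shift q a b X"
    by blast
  have "part (selection R i j T) q = {}"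
    using q Q_R_disjoint by (auto simp: part_selection)
  then have "shift q a b (X \<union> selection R i j T) = X' \<union> selection R i j T"
    by (simp add: X' shift_Un_disjoint)
  moreover have "shift q a b (X \<union> selection R i j T) \<in> F"
    using shift_closedD[OF shift_closed_F q] ab X by (auto simp: fibre_def)
  moreover have "X' \<in> layer Q n k"
    using shift_mem_layer X q ab by (auto simp: fibre_def X')
  ultimately show "X' \<in> fibre T"
    by (simp add: fibre_def)
qed

lemma ground_on_mem_fibre: "fibre T \<noteq> {} \<Longrightarrow> ground_on Q k \<in> fibre T"
  using ground_on_mem_shift_closed[OF finite_Q fibre_subset_layer _ fibre_shift_closed] .

text \<open>By maximality of \<open>F\<close>: adding \<open>X \<union> selection R i j T\<close> keeps the family intersecting.\<close>

lemma mem_fibre_if_meets_complement: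
  assumes T: "T \<subseteq> R" and X: "X \<in> layer Q n k" and meets: "\<forall>Y\<in>fibre (R - T). X \<inter> Y \<noteq> {}"
  shows "X \<in> fibre T"
proof -
  let ?G = "X \<union> selection R i j T"
  have X_ground: "X \<subseteq> ground_on Q n"
    using X by (simp add: layer_def)
  have meets_G: "?G \<inter> (Y \<union> selection R i j T') \<noteq> {}"
    if "T' \<subseteq> R" "Y \<subseteq> ground_on Q n" "T' = R - T \<longrightarrow> X \<inter> Y \<noteq> {}" for T' Y
    using Un_selection_Int_nonempty_iff[OF Q_R_disjoint i_neq_j T that(1) X_ground that(2)] that(3)
    by argo
  have "T \<noteq> R - T"
    using R_nonempty by blast
  then have "?G \<inter> ?G \<noteq> {}"
    using meets_G[OF T X_ground] by simp
  moreover have "?G \<inter> G \<noteq> {}" if "G \<in> F" for G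
  proof -
    have "G \<in> assemble R i j fibre"
      using that F_eq_assemble by simp
    then obtain T' Y where T': "T' \<subseteq> R" and Y: "Y \<in> fibre T'" and G: "G = Y \<union> selection R i j T'"
      unfolding mem_assemble by blast
    have "Y \<subseteq> ground_on Q n"
      using Y fibre_subset_Pow_ground_on by blast
    moreover have "T' = R - T \<longrightarrow> X \<inter> Y \<noteq> {}"
      using meets Y by blast
    ultimately show ?thesis
      unfolding G using meets_G[OF T'] by blast
  qed
  ultimately have "intersecting (insert ?G F)"
    using F_intersecting by (auto simp: intersecting_def Int_commute)
  moreover have "\<not> triv_intersecting (insert ?G F)"
    using F_not_triv by (auto simp: triv_intersecting_def)
  moreover have "\<forall>s\<in>R. k s = 1 \<and> i s \<in> {1..n s} \<and> j s \<in> {1..n s}"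
    using R_bounds by fastforce
  then have "?G \<in> layer (Q \<union> R) n k"
    by (rule Un_selection_mem_layer[OF X Q_R_disjoint T])
  ultimately have "card (insert ?G F) \<le> card F"
    using F_subset_layer by (intro card_le_card_F) (auto simp: nontriv_intersecting_def)
  with finite_F have "?G \<in> F"
    by (metis card_insert_if Suc_n_not_le_n)
  with X show ?thesis
    by (simp add: fibre_def)
qed

lemma fibre_or_complement_nonempty: "T \<subseteq> R \<Longrightarrow> fibre T \<noteq> {} \<or> fibre (R - T) \<noteq> {}"
  using mem_fibre_if_meets_complement[OF _ ground_on_mem_layer[OF k_le_n]] by blast

lemma fibre_Int_fibre_insert:
  assumes s: "s \<in> R" "s \<notin> T"
  shows "fibre T \<inter> fibre (insert s T) = {}"
proof (rule ccontr)
  assume "fibre T \<inter> fibre (insert s T) \<noteq> {}"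
  then obtain X where X: "X \<in> layer Q n k" "X \<union> selection R i j T \<in> F"
    and X_ins: "X \<union> selection R i j (insert s T) \<in> F"
    by (auto simp: fibre_def)
  have "part X s = {}"
    using X(1) s(1) Q_R_disjoint by (intro part_eq_empty_if_notin[of X Q n]) (auto simp: layer_def)
  then have "shift s (i s) (j s) (X \<union> selection R i j (insert s T)) = X \<union> selection R i j T"
    and "part (X \<union> selection R i j (insert s T)) s = {j s}"
    using shift_Un_selection_insert[OF s] i_neq_j s(1) by (simp_all add: part_selection)
  with shift_R_notin[OF X_ins s(1)] X(2) show False
    by simp
qed

text \<open>Every nonempty fibre contains \<open>ground_on Q k\<close>, so fibres of sets differing in one element
  cannot both be nonempty.\<close>

lemma fibre_toggle_eq_empty:
  assumes s: "s \<in> R" and ne: "fibre T \<noteq> {}"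
  shows "fibre (toggle T s) = {}"
proof (rule ccontr)
  assume "fibre (toggle T s) \<noteq> {}"
  with ne have "ground_on Q k \<in> fibre T \<inter> fibre (toggle T s)"
    by (simp add: ground_on_mem_fibre)
  moreover have "fibre T \<inter> fibre (toggle T s) = {}"
  proof (cases "s \<in> T")
    case True
    then show ?thesis
      using fibre_Int_fibre_insert[OF s(1), of "T - {s}"] by (simp add: toggle_def insert_absorb Int_commute)
  next
    case False
    then show ?thesis
      using fibre_Int_fibre_insert[OF s(1) False] by (simp add: toggle_def)
  qed
  ultimately show False
    by blast
qed

lemma fibre_nonempty_choosing:
  assumes s: "s \<in> R"
  shows "\<exists>T\<subseteq>R. (s \<in> T \<longleftrightarrow> b) \<and> fibre T \<noteq> {}"
proof -
  obtain G where G: "G \<in> F" "(s, if b then i s else j s) \<notin> G"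
    using F_not_triv by (auto simp: triv_intersecting_def)
  have "G \<in> assemble R i j fibre"
    using G(1) F_eq_assemble by simp
  then obtain T X where T: "T \<subseteq> R" "X \<in> fibre T" "G = X \<union> selection R i j T"
    unfolding mem_assemble by blast
  have "s \<in> T \<longleftrightarrow> b"
    using G(2) T(3) s by (auto simp: mem_selection split: if_splits)
  with T show ?thesis
    by blast
qed

lemma three_le_card_R: "3 \<le> card R"
proof (rule ccontr)
  assume "\<not> 3 \<le> card R"
  then have card_R: "card R \<le> 2"
    by simp
  obtain a where a: "a \<in> R"
    using R_nonempty by blast
  obtain T where T: "T \<subseteq> R" "a \<notin> T" "fibre T \<noteq> {}"
    using fibre_nonempty_choosing[OF a, of False] by blast
  have empty_a: "fibre (toggle T a) = {}"
    using fibre_toggle_eq_empty[OF a T(3)] .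
  show False
  proof (cases "R = {a}")
    case True
    obtain T' where "T' \<subseteq> R" "a \<in> T'" "fibre T' \<noteq> {}"
      using fibre_nonempty_choosing[OF a, of True] by blast
    moreover from this have "T' = R"
      using True by auto
    moreover have "toggle T a = R"
      using T(1,2) True by (auto simp: toggle_def)
    ultimately show False
      using empty_a by simp
  next
    case False
    then obtain b where b: "b \<in> R" "b \<noteq> a"
      using a by blast
    have "{a, b} \<subseteq> R" "card R \<le> card {a, b}"
      using a b card_R by auto
    then have "R = {a, b}"
      using card_seteq[OF finite_R] by blast
    then have "R - toggle T a = toggle T b"
      using T(1,2) b by (auto simp: toggle_def)
    then show False
      using fibre_or_complement_nonempty[OF toggle_subset[OF T(1) a]] empty_a
        fibre_toggle_eq_empty[OF b(1) T(3)]
      by simp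
  qed
qed

definition weight :: "nat set \<Rightarrow> nat" where
  "weight T = card (fibre T) + card (fibre (R - T))"

lemma card_F_eq_sum_weight:
  assumes "\<And>T. T \<subseteq> R \<Longrightarrow> R - T \<in> L \<longleftrightarrow> T \<notin> L"
  shows "card F = (\<Sum>T\<in>Pow R \<inter> L. weight T)"
proof -
  have "card F = (\<Sum>T\<in>Pow R. card (fibre T))"
    using card_assemble[of R Q i j fibre n] finite_R Q_R_disjoint i_neq_j finite_fibre
      fibre_subset_Pow_ground_on
    by (simp add: F_eq_assemble[symmetric])
  also have "\<dots> = (\<Sum>T\<in>Pow R \<inter> L. weight T)"
    unfolding weight_def by (rule sum_Pow_split[OF finite_R assms])
  finally show ?thesis .
qed

end

section \<open>The shifted replacement\<close>

locale Q_shifted_compression = Q_shifted_extremal +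
  fixes u :: "nat set" and a b c :: nat
  assumes u_subset: "u \<subseteq> R" and weight_le_weight_u: "\<And>T. T \<subseteq> R \<Longrightarrow> weight T \<le> weight u"
    and abc: "a \<in> R" "b \<in> R" "c \<in> R" "a \<noteq> b" "a \<noteq> c" "b \<noteq> c"
begin

definition A :: "(nat \<times> nat) set set" where
  "A = fibre u \<union> fibre (R - u)"

definition B :: "(nat \<times> nat) set set" where
  "B = fibre u \<inter> fibre (R - u)"

abbreviation L :: "nat set set" where
  "L \<equiv> at_most_one_of a b c"

definition new_fibre :: "nat set \<Rightarrow> (nat \<times> nat) set set" where
  "new_fibre T = (if T \<in> L then A else B)"

definition H :: "(nat \<times> nat) set set" where
  "H = assemble R (\<lambda>_. 1) (\<lambda>_. 2) new_fibre"

lemma Diff_mem_L_iff: "T \<subseteq> R \<Longrightarrow> R - T \<in> L \<longleftrightarrow> T \<notin> L"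
  using Diff_mem_at_most_one_of_iff[OF abc] .

lemma B_subset_A: "B \<subseteq> A"
  by (auto simp: A_def B_def)

lemma A_subset_layer: "A \<subseteq> layer Q n k"
  using fibre_subset_layer by (auto simp: A_def)

lemma new_fibre_subset_layer: "new_fibre T \<subseteq> layer Q n k"
  using A_subset_layer B_subset_A by (auto simp: new_fibre_def)

lemma new_fibre_subset_Pow_ground_on: "new_fibre T \<subseteq> Pow (ground_on Q n)"
  using new_fibre_subset_layer by (auto simp: layer_def)

lemma new_fibre_antimono: "T' \<subseteq> T \<Longrightarrow> new_fibre T \<subseteq> new_fibre T'"
  using B_subset_A by (auto simp: new_fibre_def at_most_one_of_def)

lemma new_fibre_shift_closed: "shift_closed Q n (new_fibre T)"
  by (simp add: new_fibre_def A_def B_def fibre_shift_closed shift_closed_Un shift_closed_Int)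

lemma A_B_cross_intersecting:
  assumes X: "X \<in> A" and Y: "Y \<in> B"
  shows "X \<inter> Y \<noteq> {}"
proof -
  have Y_u: "Y \<in> fibre u" and Y_Ru: "Y \<in> fibre (R - u)"
    using Y by (auto simp: B_def)
  have "R - (R - u) = u"
    using u_subset by blast
  with Y_u have "Y \<in> fibre (R - (R - u))"
    by simp
  with X show ?thesis
    unfolding A_def using fibres_cross_intersecting[OF u_subset _ Y_Ru]
      fibres_cross_intersecting[of "R - u" X Y]
    by blast
qed

lemma A_no_common_element: "\<not> (\<forall>X\<in>A. e \<in> X)"
proof
  assume common: "\<forall>X\<in>A. e \<in> X"
  have "A \<noteq> {}"
    using fibre_or_complement_nonempty[OF u_subset] by (auto simp: A_def)
  then have "ground_on Q k \<in> A"
    using ground_on_mem_fibre by (auto simp: A_def)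
  then have "\<forall>X\<in>A. ground_on Q k \<inter> X \<noteq> {}"
    using common by blast
  then have "ground_on Q k \<in> fibre u" "ground_on Q k \<in> fibre (R - u)"
    using mem_fibre_if_meets_complement[OF _ ground_on_mem_layer[OF k_le_n]] u_subset
    by (auto simp: A_def double_diff)
  then have "fibre (toggle u a) = {}" "fibre (toggle (R - u) a) = {}"
    using fibre_toggle_eq_empty[OF abc(1)] by blast+
  moreover have "R - toggle u a = toggle (R - u) a"
    using Diff_toggle[OF u_subset abc(1)] .
  ultimately show False
    using fibre_or_complement_nonempty[OF toggle_subset[OF u_subset abc(1)]] by simp
qed

lemma H_subset_layer: "H \<subseteq> layer (Q \<union> R) n k"
proof
  fix G assume "G \<in> H"
  then obtain T X where T: "T \<subseteq> R" and X: "X \<in> new_fibre T"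
    and G: "G = X \<union> selection R (\<lambda>_. 1) (\<lambda>_. 2) T"
    unfolding H_def mem_assemble by blast
  have "\<forall>s\<in>R. k s = 1 \<and> (1::nat) \<in> {1..n s} \<and> (2::nat) \<in> {1..n s}"
    using R_bounds by fastforce
  moreover have "X \<in> layer Q n k"
    using X new_fibre_subset_layer by blast
  ultimately show "G \<in> layer (Q \<union> R) n k"
    unfolding G by (intro Un_selection_mem_layer[OF _ Q_R_disjoint T])
qed

lemma H_intersecting: "intersecting H"
  unfolding H_def
proof (subst intersecting_assemble_iff[OF Q_R_disjoint])
  show "\<forall>s\<in>R. (1::nat) \<noteq> 2" by simp
  show "new_fibre T \<subseteq> Pow (ground_on Q n)" for T
    by (rule new_fibre_subset_Pow_ground_on)
  show "\<forall>T\<subseteq>R. \<forall>X\<in>new_fibre T. \<forall>Y\<in>new_fibre (R - T). X \<inter> Y \<noteq> {}"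
  proof (intro allI impI ballI)
    fix T X Y assume T: "T \<subseteq> R" and X: "X \<in> new_fibre T" and Y: "Y \<in> new_fibre (R - T)"
    show "X \<inter> Y \<noteq> {}"
    proof (cases "T \<in> L")
      case True
      with X Y Diff_mem_L_iff[OF T] show ?thesis
        by (simp add: new_fibre_def A_B_cross_intersecting)
    next
      case False
      with X Y Diff_mem_L_iff[OF T] have "Y \<inter> X \<noteq> {}"
        by (simp add: new_fibre_def A_B_cross_intersecting)
      then show ?thesis
        by (simp add: Int_commute)
    qed
  qed
qed

lemma H_not_triv: "\<not> triv_intersecting H"
proof
  assume "triv_intersecting H"
  then obtain s x where common: "\<And>G. G \<in> H \<Longrightarrow> (s, x) \<in> G"
    unfolding triv_intersecting_def by auto
  have mem_H: "X \<union> selection R (\<lambda>_. 1) (\<lambda>_. 2) T \<in> H" if "X \<in> A" "T \<subseteq> R" "T \<in> L" for X T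
    using that unfolding H_def mem_assemble new_fibre_def by auto
  have "{} \<in> L" "{s} \<in> L"
    using abc(4-6) by (auto simp: at_most_one_of_def)
  show False
  proof (cases "s \<in> R")
    case True
    obtain X where X: "X \<in> A"
      using A_no_common_element by blast
    have "(s, x) \<notin> X"
      using X A_subset_layer True Q_R_disjoint by (auto simp: layer_def ground_on_def)
    then have "(s, x) \<in> selection R (\<lambda>_. 1) (\<lambda>_. 2) {}" "(s, x) \<in> selection R (\<lambda>_. 1) (\<lambda>_. 2) {s}"
      using common mem_H[OF X] True \<open>{} \<in> L\<close> \<open>{s} \<in> L\<close> by blast+
    then show False
      by (simp add: mem_selection)
  next
    case False
    have "(s, x) \<in> X" if "X \<in> A" for X
      using common[OF mem_H[OF that _ \<open>{} \<in> L\<close>]] False by (simp add: mem_selection)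
    with A_no_common_element show False
      by blast
  qed
qed

lemma H_shift_closed: "shift_closed {1..p} n H"
  unfolding shift_closed_def
proof (intro ballI allI impI subsetI)
  fix t a' b' G'
  assume t: "t \<in> {1..p}" and ab: "1 \<le> a' \<and> a' < b' \<and> b' \<le> n t"
    and "G' \<in> shift t a' b' ` H"
  then obtain G where "G \<in> H" and G': "G' = shift t a' b' G"
    by blast
  then obtain T X where T: "T \<subseteq> R" and X: "X \<in> new_fibre T"
    and G: "G = X \<union> selection R (\<lambda>_. 1) (\<lambda>_. 2) T"
    unfolding H_def mem_assemble by blast
  have mem_H: "X' \<union> selection R (\<lambda>_. 1) (\<lambda>_. 2) T' \<in> H" if "T' \<subseteq> R" "X' \<in> new_fibre T'" for X' T'
    using that unfolding H_def mem_assemble by blast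
  show "G' \<in> H"
  proof (cases "t \<in> Q")
    case True
    then have "part (selection R (\<lambda>_. 1) (\<lambda>_. 2) T) t = {}"
      using Q_R_disjoint by (auto simp: part_selection)
    then have "G' = shift t a' b' X \<union> selection R (\<lambda>_. 1) (\<lambda>_. 2) T"
      by (simp add: G' G shift_Un_disjoint)
    moreover have "shift t a' b' X \<in> new_fibre T"
      using shift_closedD[OF new_fibre_shift_closed True] ab X by blast
    ultimately show ?thesis
      using mem_H T by simp
  next
    case False
    then have tR: "t \<in> R"
      using t Q_Un_R by blast
    have "X \<subseteq> ground_on Q n"
      using X new_fibre_subset_Pow_ground_on by blast
    then have part_X: "part X t = {}"
      using False by (rule part_eq_empty_if_notin)
    show ?thesis
    proof (cases "t \<in> T \<and> a' = 1 \<and> b' = 2")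
      case True
      then have "G' = X \<union> selection R (\<lambda>_. 1) (\<lambda>_. 2) (T - {t})"
        using shift_Un_selection_insert[OF tR _ _ part_X, of "T - {t}", where lo = "\<lambda>_. 1" and hi = "\<lambda>_. 2"]
        by (simp add: G' G insert_absorb)
      moreover have "X \<in> new_fibre (T - {t})"
        using new_fibre_antimono X by blast
      ultimately show ?thesis
        using mem_H T by blast
    next
      case False
      then have "G' = X \<union> selection R (\<lambda>_. 1) (\<lambda>_. 2) T"
        using ab tR part_X by (auto simp: G' G shift_def part_selection)
      then show ?thesis
        using mem_H T X by blast
    qed
  qed
qed

lemma finite_new_fibre: "finite (new_fibre T)"
  using new_fibre_subset_layer finite_layer[OF finite_Q] finite_subset by blast

lemma card_A_add_card_B: "card A + card B = weight u"
  using card_Un_Int[OF finite_fibre finite_fibre, of u "R - u"]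
  by (simp add: A_def B_def weight_def)

lemma card_F_le_card_H: "card F \<le> card H"
proof -
  have "card F = (\<Sum>T\<in>Pow R \<inter> L. weight T)"
    by (rule card_F_eq_sum_weight[OF Diff_mem_L_iff])
  also have "\<dots> \<le> (\<Sum>T\<in>Pow R \<inter> L. card A + card B)"
    using weight_le_weight_u by (intro sum_mono) (simp add: card_A_add_card_B)
  also have "\<dots> = (\<Sum>T\<in>Pow R \<inter> L. card (new_fibre T) + card (new_fibre (R - T)))"
    by (intro sum.cong refl) (simp add: new_fibre_def Diff_mem_L_iff)
  also have "\<dots> = (\<Sum>T\<in>Pow R. card (new_fibre T))"
    by (rule sum_Pow_split[OF finite_R Diff_mem_L_iff, symmetric])
  also have "\<dots> = card H"
    unfolding H_def
    by (rule card_assemble[OF finite_R Q_R_disjoint, where n = n, symmetric])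
      (simp_all add: finite_new_fibre new_fibre_subset_Pow_ground_on)
  finally show ?thesis .
qed

lemma max_nontriv_H: "max_nontriv p n k H"
  using H_subset_layer H_intersecting H_not_triv card_F_le_card_H max_F
  by (auto simp: max_nontriv_def nontriv_intersecting_def prodfam_eq_layer Q_Un_R)

end

context Q_shifted_extremal
begin

lemma ex_shifted_max_nontriv: "\<exists>H. max_nontriv p n k H \<and> shifted p n H"
proof -
  obtain S where "S \<subseteq> R" "card S = 3"
    using obtain_subset_with_card_n[OF three_le_card_R] by blast
  then obtain a b c where abc: "a \<in> R" "b \<in> R" "c \<in> R" "a \<noteq> b" "a \<noteq> c" "b \<noteq> c"
    unfolding card_3_iff by blast
  have "Max (weight ` Pow R) \<in> weight ` Pow R"
    by (rule Max_in) (auto simp: finite_R)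
  then obtain u where u: "u \<subseteq> R" "weight u = Max (weight ` Pow R)"
    by auto
  have "weight T \<le> weight u" if "T \<subseteq> R" for T
    unfolding u(2) using that finite_R by (intro Max_ge) auto
  with u(1) abc interpret Q_shifted_compression p n k Q F i j u a b c
    by unfold_locales
  show ?thesis
    using max_nontriv_H H_shift_closed by (auto simp: shifted_iff_shift_closed)
qed

end

theorem lemma2p4:
  fixes p :: nat and n k :: "nat \<Rightarrow> nat" and Q :: "nat set"
    and \<F> :: "(nat \<times> nat) set set"
  assumes "p \<ge> 1"
    and "\<forall>s\<in>{1..p}. n s \<ge> 1"
    and "\<forall>s\<in>{1..p}. 1 \<le> k s \<and> k s \<le> n s"
    and "max_nontriv p n k \<F>"
    and "Q \<subset> {1..p}"
    and "Q_shifted p n Q \<F>"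
    and "\<forall>t\<in>{1..p} - Q. k t = 1"
  shows "\<exists>\<F>'. max_nontriv p n k \<F>' \<and> shifted p n \<F>'"
proof -
  have "\<forall>s\<in>{1..p} - Q. \<exists>i j. 1 \<le> i \<and> i < j \<and> j \<le> n s \<and>
      triv_intersecting (shift_fam s i j \<F>)"
    using assms(6) by (simp add: Q_shifted_def)
  then obtain i j where ij: "\<forall>s\<in>{1..p} - Q. 1 \<le> i s \<and> i s < j s \<and> j s \<le> n s \<and>
      triv_intersecting (shift_fam s (i s) (j s) \<F>)"
    by metis
  have "shift_closed Q n \<F>"
    using assms(6) by (simp add: Q_shifted_def shift_closed_iff_t_shifted)
  moreover have "\<forall>s\<in>Q. k s \<le> n s"
    using assms(3,5) by auto
  ultimately interpret Q_shifted_extremal p n k Q \<F> i j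
    using assms(4,5,7) ij by unfold_locales
  show ?thesis
    by (rule ex_shifted_max_nontriv)
qed

end
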